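(* Fix $t\in\{1,\dots,M\}$ and let $z^*\in F(\mathcal{T}_t)$ with $|K_t(z^* )|=1$. Set $$r_t=\min\Big\{d_{sep}(z^*,C_t),\ \frac{d_{sep}(z^*,C_t)+d_{esc}(z^*,C_t)}{2}\Big\}.$$ Then every $z\in B(z^*,r_t)$ satisfies $K_t(z)=K_t(z^* )$.
   Context: Fix reals $W,H>0$, integers $N\ge N_m\ge 2$, and widths $w_i>0$, heights $h_i>0$ for $1\le i\le N_m$. Points of $\mathbb{R}^{2N}$ are written $z=(x,y)$ with $x=(x_1,\dots,x_N)$, $y=(y_1,\dots,y_N)$. For $1\le i\le N_m$ let $B_i^x=\{z: 0\le x_i\le W-w_i\}$, $B_i^y=\{z: 0\le y_i\le H-h_i\}$; for $i\neq j$ let $B_{i,j}=B_i^x\cap B_i^y\cap B_j^x\cap B_j^y$, $O^x_{i,j}=\{z: x_i+w_i\le x_j\}$, $O^y_{i,j}=\{z: y_i+h_i\le y_j\}$. Define the closed convex sets $C_{i,j,\mathsf{L}}=O^x_{i,j}\cap B_{i,j}$, $C_{i,j,\mathsf{R}}=O^x_{j,i}\cap B_{i,j}$, $C_{i,j,\mathsf{B}}=O^y_{i,j}\cap B_{i,j}$, $C_{i,j,\mathsf{A}}=O^y_{j,i}\cap B_{i,j}$ (assumed nonempty) and $C_{i,j}=C_{i,j,\mathsf{L}}\cup C_{i,j,\mathsf{R}}\cup C_{i,j,\mathsf{B}}\cup C_{i,j,\mathsf{A}}$. Enumerate the pairs $1\le i<j\le N_m$ by $t=1,\dots,M$ and write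 $C_t=C_{i,j}$, $C_{t,k}=C_{i,j,k}$. With the Euclidean norm and $\mathrm{d}(z,C)=\inf_{c\in C}\|z-c\|$: $\mathcal{P}_t(z)=\{c\in C_t:\|z-c\|=\mathrm{d}(z,C_t)\}$, $P_{t,k}(z)$ is the unique nearest point of $C_{t,k}$ to $z$; for a fixed $\lambda\in(0,2)$, $\mathcal{T}_t(z)=\{z+\lambda(p-z):p\in\mathcal{P}_t(z)\}$, $F(\mathcal{T}_t)=\{z: z\in\mathcal{T}_t(z)\}$. Active indices: $K_t(z)=\{k\in\{\mathsf{L},\mathsf{R},\mathsf{B},\mathsf{A}\}: P_{t,k}(z)\in\mathcal{P}_t(z)\}$. $d_{esc}(z^*,C_t)=\inf\{\|z-z^*\| : z\notin C_{t,k}\text{ for some }k\in K_t(z^* )\}$; $d_{sep}(z^*,C_t)=\min\{\mathrm{d}(z^*,C_{t,k}) : k\notin K_t(z^* )\}$. $B(z,r)$ is the open Euclidean ball (empty if $r=0$). *)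

theory Defs
  imports "HOL-Analysis.Analysis"
begin

text \<open>Points of R^(2N) are pairs (x,y) with x y :: real^'n, CARD('n) = N.
 The product norm is the Euclidean norm of R^(2N).\<close>

type_synonym ('n) pt = "(real^'n) \<times> (real^'n)"

datatype side = SL | SR | SB | SA

definition Bx :: "real \<Rightarrow> ('n::finite \<Rightarrow> real) \<Rightarrow> 'n \<Rightarrow> 'n pt set" where
  "Bx W w i = {z. 0 \<le> fst z $ i \<and> fst z $ i \<le> W - w i}"

definition By :: "real \<Rightarrow> ('n::finite \<Rightarrow> real) \<Rightarrow> 'n \<Rightarrow> 'n pt set" where
  "By H h i = {z. 0 \<le> snd z $ i \<and> snd z $ i \<le> H - h i}"

definition Bij :: "real \<Rightarrow> real \<Rightarrow> ('n::finite \<Rightarrow> real) \<Rightarrow> ('n::finite \<Rightarrow> real) \<Rightarrow> 'n \<Rightarrow> 'n \<Rightarrow> 'n pt set" where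
  "Bij W H w h i j = Bx W w i \<inter> By H h i \<inter> Bx W w j \<inter> By H h j"

definition Ox :: "('n::finite \<Rightarrow> real) \<Rightarrow> 'n \<Rightarrow> 'n \<Rightarrow> 'n pt set" where
  "Ox w i j = {z. fst z $ i + w i \<le> fst z $ j}"

definition Oy :: "('n::finite \<Rightarrow> real) \<Rightarrow> 'n \<Rightarrow> 'n \<Rightarrow> 'n pt set" where
  "Oy h i j = {z. snd z $ i + h i \<le> snd z $ j}"

definition Cset :: "real \<Rightarrow> real \<Rightarrow> ('n::finite \<Rightarrow> real) \<Rightarrow> ('n::finite \<Rightarrow> real) \<Rightarrow> 'n \<Rightarrow> 'n \<Rightarrow> side \<Rightarrow> 'n pt set" where
  "Cset W H w h i j k = (case k of
      SL \<Rightarrow> Ox w i j \<inter> Bij W H w h i j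
    | SR \<Rightarrow> Ox w j i \<inter> Bij W H w h i j
    | SB \<Rightarrow> Oy h i j \<inter> Bij W H w h i j
    | SA \<Rightarrow> Oy h j i \<inter> Bij W H w h i j)"

definition Cunion :: "real \<Rightarrow> real \<Rightarrow> ('n::finite \<Rightarrow> real) \<Rightarrow> ('n::finite \<Rightarrow> real) \<Rightarrow> 'n \<Rightarrow> 'n \<Rightarrow> 'n pt set" where
  "Cunion W H w h i j = Cset W H w h i j SL \<union> Cset W H w h i j SR \<union> Cset W H w h i j SB \<union> Cset W H w h i j SA"

definition Pset :: "'a::metric_space set \<Rightarrow> 'a \<Rightarrow> 'a set" where
  "Pset C z = {c \<in> C. dist z c = infdist z C}"

definition Tmap :: "real \<Rightarrow> 'a::real_normed_vector set \<Rightarrow> 'a \<Rightarrow> 'a set" where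
  "Tmap lam C z = {z + lam *\<^sub>R (p - z) | p. p \<in> Pset C z}"

definition Fix :: "real \<Rightarrow> 'a::real_normed_vector set \<Rightarrow> 'a set" where
  "Fix lam C = {z. z \<in> Tmap lam C z}"

text \<open>Active indices; P_{t,k}(z) is the unique nearest point closest_point.\<close>
definition Kact :: "real \<Rightarrow> real \<Rightarrow> ('n::finite \<Rightarrow> real) \<Rightarrow> ('n::finite \<Rightarrow> real) \<Rightarrow> 'n \<Rightarrow> 'n \<Rightarrow> 'n pt \<Rightarrow> side set" where
  "Kact W H w h i j z = {k. closest_point (Cset W H w h i j k) z \<in> Pset (Cunion W H w h i j) z}"

definition desc :: "real \<Rightarrow> real \<Rightarrow> ('n::finite \<Rightarrow> real) \<Rightarrow> ('n::finite \<Rightarrow> real) \<Rightarrow> 'n \<Rightarrow> 'n \<Rightarrow> 'n pt \<Rightarrow> real" where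
  "desc W H w h i j zs = Inf {norm (z - zs) | z. \<exists>k \<in> Kact W H w h i j zs. z \<notin> Cset W H w h i j k}"

definition dsep :: "real \<Rightarrow> real \<Rightarrow> ('n::finite \<Rightarrow> real) \<Rightarrow> ('n::finite \<Rightarrow> real) \<Rightarrow> 'n \<Rightarrow> 'n \<Rightarrow> 'n pt \<Rightarrow> real" where
  "dsep W H w h i j zs = Min ((\<lambda>k. infdist zs (Cset W H w h i j k)) ` ({SL, SR, SB, SA} - Kact W H w h i j zs))"

end

theory Submission
  imports Defs
begin

text \<open>A fixed point of the relaxed projection lies in \<open>C_t\<close>, so the active sides at \<open>z*\<close>
  are exactly those containing it; the unique active side \<open>C_{t,k0}\<close> contains the ball
  \<open>B(z*, d_esc)\<close>. For \<open>z\<close> near \<open>z*\<close> the distance to \<open>C_{t,k0}\<close> is therefore at most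
  \<open>max 0 (|z - z*| - d_esc)\<close>, while by the 1-Lipschitz property the distance to every other
  side is at least \<open>d_sep - |z - z*|\<close>. The radius \<open>r_t\<close> is chosen so that the first bound is
  strictly smaller than the second, hence \<open>k0\<close> remains the unique nearest side.\<close>

lemma infdist_le_dist_minus_radius:
  fixes S :: "'a::real_normed_vector set"
  assumes "a \<in> S" and "ball a r \<subseteq> S"
  shows "infdist x S \<le> max 0 (dist x a - r)"
proof (cases "r > 0 \<and> dist x a > r")
  case True
  define d where "d = dist x a"
  define y where "y = a + (r / d) *\<^sub>R (x - a)"
  have d: "d > r" "r > 0" "norm (x - a) = d"
    using True by (simp_all add: d_def dist_norm)
  have "dist a y = r"
    using d by (simp add: y_def dist_norm)
  then have "y \<in> closure (ball a r)"
    using d by simp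
  moreover have "x - y = (1 - r / d) *\<^sub>R (x - a)"
    by (simp add: y_def algebra_simps)
  then have "dist x y = (1 - r / d) * d"
    using d by (simp add: dist_norm)
  then have "dist x y = d - r"
    using d by (simp add: algebra_simps)
  ultimately have "infdist x (closure (ball a r)) \<le> d - r"
    by (metis infdist_le)
  moreover have "infdist x S \<le> infdist x (ball a r)"
    using assms d by (intro infdist_mono) auto
  ultimately show ?thesis
    by (simp add: infdist_eq_setdist d_def)
next
  case False
  then consider "r \<le> 0" | "dist x a \<le> r" "r > 0"
    by linarith
  then show ?thesis
  proof cases
    case 1
    then show ?thesis
      using infdist_le[OF assms(1), of x] by linarith
  next
    case 2
    then have "x \<in> closure (ball a r)"
      by (simp add: dist_commute)
    then have "infdist x (closure (ball a r)) = 0"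
      by simp
    moreover have "infdist x S \<le> infdist x (ball a r)"
      using assms 2 by (intro infdist_mono) auto
    ultimately show ?thesis
      by (simp add: infdist_eq_setdist)
  qed
qed

lemma infdist_less_infdist_near_centre:
  fixes S T :: "'a::real_normed_vector set"
  assumes "a \<in> S" and "ball a e \<subseteq> S" and "d \<le> infdist a T"
    and "dist x a < min d ((d + e) / 2)"
  shows "infdist x S < infdist x T"
proof -
  have "infdist x S \<le> max 0 (dist x a - e)"
    using assms(1,2) by (rule infdist_le_dist_minus_radius)
  also have "\<dots> < d - dist x a"
    using assms(4) by simp
  also have "\<dots> \<le> infdist x T"
    using assms(3) infdist_triangle[of a T x] by (simp add: dist_commute)
  finally show ?thesis .
qed

lemma Fix_subset:
  assumes "lam \<noteq> 0"
  shows "Fix lam C \<subseteq> C"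
proof
  fix z assume "z \<in> Fix lam C"
  then obtain p where "z = z + lam *\<^sub>R (p - z)" and "p \<in> Pset C z"
    unfolding Fix_def Tmap_def by auto
  then show "z \<in> C"
    using assms by (simp add: Pset_def)
qed

lemma closest_point_in_Pset_iff:
  assumes "closed S" and "S \<noteq> {}" and "S \<subseteq> U"
  shows "closest_point S x \<in> Pset U x \<longleftrightarrow> infdist x S = infdist x U"
  using assms closest_point_in_set[OF assms(1,2)]
  by (auto simp: Pset_def infdist_eq_setdist setdist_closest_point)

lemma closed_Cset: "closed (Cset W H w h i j k)"
proof -
  have "closed (Bij W H w h i j)"
    unfolding Bij_def Bx_def By_def
    by (intro closed_Int closed_Collect_conj closed_Collect_le continuous_intros)
  moreover have "closed (Ox w a b)" "closed (Oy h a b)" for a b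
    unfolding Ox_def Oy_def by (intro closed_Collect_le continuous_intros)+
  ultimately show ?thesis
    unfolding Cset_def by (cases k) auto
qed

lemma Cset_subset_Cunion: "Cset W H w h i j k \<subseteq> Cunion W H w h i j"
  unfolding Cunion_def by (cases k) auto

lemma Kact_eq_argmin:
  assumes "\<And>k. Cset W H w h i j k \<noteq> {}"
  shows "Kact W H w h i j x =
    {k. \<forall>k'. infdist x (Cset W H w h i j k) \<le> infdist x (Cset W H w h i j k')}"
proof -
  define g where "g k = infdist x (Cset W H w h i j k)" for k
  have union: "infdist x (Cunion W H w h i j) = min (min (min (g SL) (g SR)) (g SB)) (g SA)"
    unfolding Cunion_def g_def using assms by (simp add: infdist_Un_min)
  have all_sides: "(\<forall>k'. g k \<le> g k') \<longleftrightarrow> g k \<le> g SL \<and> g k \<le> g SR \<and> g k \<le> g SB \<and> g k \<le> g SA"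
    for k by (metis side.exhaust)
  have "g k = min (min (min (g SL) (g SR)) (g SB)) (g SA) \<longleftrightarrow> (\<forall>k'. g k \<le> g k')" for k
    unfolding all_sides by (cases k) (auto simp: min_def)
  then show ?thesis
    unfolding Kact_def
    by (simp add: closest_point_in_Pset_iff closed_Cset assms Cset_subset_Cunion union g_def)
qed

lemma Kact_eq_containing:
  assumes "\<And>k. Cset W H w h i j k \<noteq> {}" and "x \<in> Cunion W H w h i j"
  shows "Kact W H w h i j x = {k. x \<in> Cset W H w h i j k}"
proof -
  define g where "g k = infdist x (Cset W H w h i j k)" for k
  have zero: "g k = 0 \<longleftrightarrow> x \<in> Cset W H w h i j k" for k
    unfolding g_def using in_closed_iff_infdist_zero[OF closed_Cset assms(1)] by simp
  obtain k1 where "x \<in> Cset W H w h i j k1"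
    using assms(2) unfolding Cunion_def by blast
  then have "(\<forall>k'. g k \<le> g k') \<longleftrightarrow> g k = 0" for k
    using zero infdist_nonneg[of x] unfolding g_def by (metis order_antisym)
  then show ?thesis
    unfolding Kact_eq_argmin[OF assms(1)] g_def[symmetric] zero by simp
qed

lemma dsep_le_infdist:
  assumes "k \<notin> Kact W H w h i j zs"
  shows "dsep W H w h i j zs \<le> infdist zs (Cset W H w h i j k)"
  unfolding dsep_def using assms by (intro Min_le) (cases k; auto)+

lemma ball_desc_subset:
  assumes "Kact W H w h i j zs = {k0}"
  shows "ball zs (desc W H w h i j zs) \<subseteq> Cset W H w h i j k0"
proof
  fix y assume y: "y \<in> ball zs (desc W H w h i j zs)"
  show "y \<in> Cset W H w h i j k0"
  proof (rule ccontr)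
    assume outside: "y \<notin> Cset W H w h i j k0"
    have "desc W H w h i j zs \<le> norm (y - zs)"
      unfolding desc_def assms
    proof (rule cInf_lower)
      show "norm (y - zs) \<in> {norm (z - zs) |z. \<exists>k\<in>{k0}. z \<notin> Cset W H w h i j k}"
        using outside by blast
    qed (auto intro: bdd_belowI[where m = 0])
    then show False
      using y by (simp add: dist_norm norm_minus_commute)
  qed
qed

lemma Kact_eq_near_single_active:
  assumes nonempty: "\<And>k. Cset W H w h i j k \<noteq> {}"
    and "zs \<in> Cunion W H w h i j" and k0: "Kact W H w h i j zs = {k0}"
    and near: "dist z zs < min (dsep W H w h i j zs) ((dsep W H w h i j zs + desc W H w h i j zs) / 2)"
  shows "Kact W H w h i j z = {k0}"
proof -
  let ?C = "Cset W H w h i j"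
  have "zs \<in> ?C k0"
    using k0 Kact_eq_containing[OF nonempty \<open>zs \<in> Cunion W H w h i j\<close>] by blast
  have strict: "infdist z (?C k0) < infdist z (?C k)" if "k \<noteq> k0" for k
  proof (rule infdist_less_infdist_near_centre[OF \<open>zs \<in> ?C k0\<close> ball_desc_subset[OF k0] _ near])
    show "dsep W H w h i j zs \<le> infdist zs (?C k)"
      using that k0 by (intro dsep_le_infdist) simp
  qed
  have "(\<forall>k'. infdist z (?C k) \<le> infdist z (?C k')) \<longleftrightarrow> k = k0" for k
    using strict by (metis less_le_not_le order_refl)
  then show ?thesis
    unfolding Kact_eq_argmin[OF nonempty] by auto
qed

theorem mainTheorem5:
  fixes W H lam :: real and w h :: "'n::{finite,linorder} \<Rightarrow> real"
    and I :: "'n set" and i j :: 'n and zs :: "'n pt"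
  assumes "W > 0" and "H > 0"
    and "card I \<ge> 2"
    and "\<forall>a\<in>I. w a > 0 \<and> h a > 0"
    and "\<forall>a\<in>I. \<forall>b\<in>I. a \<noteq> b \<longrightarrow> (\<forall>k. Cset W H w h a b k \<noteq> {})"
    and "0 < lam" and "lam < 2"
    and "i \<in> I" and "j \<in> I" and "i < j"
    and "zs \<in> Fix lam (Cunion W H w h i j)"
    and "card (Kact W H w h i j zs) = 1"
  shows "\<forall>z \<in> ball zs (min (dsep W H w h i j zs)
                       ((dsep W H w h i j zs + desc W H w h i j zs) / 2)).
           Kact W H w h i j z = Kact W H w h i j zs"
proof
  fix z assume z: "z \<in> ball zs (min (dsep W H w h i j zs)
                       ((dsep W H w h i j zs + desc W H w h i j zs) / 2))"
  have "i \<noteq> j"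
    using assms(10) by simp
  then have nonempty: "\<And>k. Cset W H w h i j k \<noteq> {}"
    using assms(5,8,9) by simp
  obtain k0 where k0: "Kact W H w h i j zs = {k0}"
    using assms(12) card_1_singletonE by blast
  have "zs \<in> Cunion W H w h i j"
    using assms(6,11) Fix_subset[of lam] by blast
  moreover have "dist z zs < min (dsep W H w h i j zs) ((dsep W H w h i j zs + desc W H w h i j zs) / 2)"
    using z by (simp add: dist_commute)
  ultimately show "Kact W H w h i j z = Kact W H w h i j zs"
    using Kact_eq_near_single_active[OF nonempty _ k0] k0 by simp
qed

end
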